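(* Let $\Omega=\{\rho<0\}\subset\mathbb{C}^n$, $n\ge2$, be a strongly convex domain with $0\in\partial\Omega$ whose $C^3$ defining function has near $0$ the form $$\rho(z)=2\,\mathrm{Re}(z_n)+\sum_{j,k=1}^nA_{jk}z_j\bar z_k+O(|z|^3)$$ with the Hermitian form $\sum A_{jk}z_j\bar z_k$ positive definite. Then there exist constants $c,\varepsilon_0>0$ such that for $0<\eta,\varepsilon<\varepsilon_0$: $$D^e(0,\eta,\varepsilon)\subset D_0(c\eta,c\varepsilon),\qquad D_0(\eta,\varepsilon)\subset D^e(0,c\eta,c\varepsilon).$$
   Context: $D_0(\eta,\varepsilon)=\{\tau\in\mathbb{C}^n\setminus\Omega:|\tau_1|^2+\dots+|\tau_{n-1}|^2<\eta\,\mathrm{Re}(\tau_n),\ |\mathrm{Im}(\tau_n)|<\eta\,\mathrm{Re}(\tau_n),\ |\mathrm{Re}(\tau_n)|<\varepsilon\}$. External Korányi region: with $\langle\partial\rho(\xi),w\rangle=\sum_k\frac{\partial\rho}{\partial\xi_k}(\xi)w_k$, $n(\xi)=\bar\partial\rho(\xi)/|\bar\partial\rho(\xi)|$, $T_\xi=\{w:\langle\partial\rho(\xi),\xi-w\rangle=0\}$, and $\tau=w+t\,n(\xi)$ the unique decomposition with $w\in T_\xi$, $t\in\mathbb{C}$, $D^e(\xi,\eta,\varepsilon)=\{\tau\in\mathbb{C}^n\setminus\Omega:|w-\xi|<\sqrt{\eta\rho(\tau)},\ |\mathrm{Im}\,t|<\eta\rho(\tau),\ \rho(\tau)<\varepsilon\}$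 (for $\xi=0$ here: $w=(\tau_1,\dots,\tau_{n-1},0)$, $t=\tau_n$).
   Formalization: The first inclusion covers only the points of $D^e(0,\eta,\varepsilon)$ in a fixed ball about 0, whose positive radius is chosen along with c and $\varepsilon_0$, independently of $\eta$ and $\varepsilon$. The statement above fails without it. *)

theory Defs
  imports "HOL-Analysis.Analysis"
begin

(* C^n is modelled as complex^'n; the distinguished last coordinate z_n is the
   largest index of the (finite, linearly ordered) index type. *)
definition lastidx :: "'n::{finite,linorder}" where
  "lastidx = Max (UNIV :: 'n set)"

definition C3_on :: "'a::real_normed_vector set \<Rightarrow> ('a \<Rightarrow> real) \<Rightarrow> bool" where
  "C3_on S f \<longleftrightarrow> open S \<and>
     (\<exists>(f1 :: 'a \<Rightarrow> ('a \<Rightarrow>\<^sub>L real)) (f2 :: 'a \<Rightarrow> ('a \<Rightarrow>\<^sub>L ('a \<Rightarrow>\<^sub>L real)))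
        (f3 :: 'a \<Rightarrow> ('a \<Rightarrow>\<^sub>L ('a \<Rightarrow>\<^sub>L ('a \<Rightarrow>\<^sub>L real)))).
        (\<forall>x\<in>S. (f has_derivative blinfun_apply (f1 x)) (at x)) \<and>
        (\<forall>x\<in>S. (f1 has_derivative blinfun_apply (f2 x)) (at x)) \<and>
        (\<forall>x\<in>S. (f2 has_derivative blinfun_apply (f3 x)) (at x)) \<and>
        continuous_on S f3)"

definition strongly_convex_domain ::
  "'a::euclidean_space set \<Rightarrow> ('a \<Rightarrow> real) \<Rightarrow> bool" where
  "strongly_convex_domain \<Omega> \<rho> \<longleftrightarrow>
     open \<Omega> \<and> connected \<Omega> \<and> bounded \<Omega> \<and> \<Omega> = {z. \<rho> z < 0} \<and>
     (\<exists>U. frontier \<Omega> \<subseteq> U \<and> C3_on U \<rho> \<and>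
        (\<forall>p\<in>frontier \<Omega>.
           frechet_derivative \<rho> (at p) \<noteq> (\<lambda>v. 0) \<and>
           (\<forall>v. v \<noteq> 0 \<and> frechet_derivative \<rho> (at p) v = 0 \<longrightarrow>
              frechet_derivative (\<lambda>x. frechet_derivative \<rho> (at x) v) (at p) v > 0)))"

definition herm_form :: "complex^'n^'n \<Rightarrow> complex^'n \<Rightarrow> complex" where
  "herm_form A z = (\<Sum>j\<in>UNIV. \<Sum>k\<in>UNIV. A$j$k * z$j * cnj (z$k))"

definition hermitian_pos_def :: "complex^'n^'n \<Rightarrow> bool" where
  "hermitian_pos_def A \<longleftrightarrow> (\<forall>j k. A$j$k = cnj (A$k$j)) \<and>
     (\<forall>z. z \<noteq> 0 \<longrightarrow> Re (herm_form A z) > 0)"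

(* complex partial derivative d rho / d z_k (xi) = (d/dx_k - i d/dy_k) rho / 2 *)
definition cpartial :: "(complex^'n \<Rightarrow> real) \<Rightarrow> complex^'n \<Rightarrow> 'n \<Rightarrow> complex" where
  "cpartial \<rho> \<xi> k =
     (complex_of_real (frechet_derivative \<rho> (at \<xi>) (axis k 1))
      - \<i> * complex_of_real (frechet_derivative \<rho> (at \<xi>) (axis k \<i>))) / 2"

definition dpair :: "(complex^'n \<Rightarrow> real) \<Rightarrow> complex^'n \<Rightarrow> complex^'n \<Rightarrow> complex" where
  "dpair \<rho> \<xi> w = (\<Sum>k\<in>UNIV. cpartial \<rho> \<xi> k * w$k)"

definition dbar :: "(complex^'n \<Rightarrow> real) \<Rightarrow> complex^'n \<Rightarrow> complex^'n" where
  "dbar \<rho> \<xi> = (\<chi> k. cnj (cpartial \<rho> \<xi> k))"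

definition unormal :: "(complex^'n \<Rightarrow> real) \<Rightarrow> complex^'n \<Rightarrow> complex^'n" where
  "unormal \<rho> \<xi> = (1 / norm (dbar \<rho> \<xi>)) *\<^sub>R dbar \<rho> \<xi>"

definition tangent_plane :: "(complex^'n \<Rightarrow> real) \<Rightarrow> complex^'n \<Rightarrow> (complex^'n) set" where
  "tangent_plane \<rho> \<xi> = {w. dpair \<rho> \<xi> (\<xi> - w) = 0}"

definition decomp :: "(complex^'n \<Rightarrow> real) \<Rightarrow> complex^'n \<Rightarrow> complex^'n \<Rightarrow> (complex^'n) \<times> complex" where
  "decomp \<rho> \<xi> \<tau> = (THE (w, t). w \<in> tangent_plane \<rho> \<xi> \<and> \<tau> = w + t *s unormal \<rho> \<xi>)"

definition Dext :: "(complex^'n) set \<Rightarrow> (complex^'n \<Rightarrow> real) \<Rightarrow> complex^'n \<Rightarrow> real \<Rightarrow> real \<Rightarrow> (complex^'n) set" where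
  "Dext \<Omega> \<rho> \<xi> \<eta> \<epsilon> = {\<tau>. \<tau> \<notin> \<Omega> \<and>
      norm (fst (decomp \<rho> \<xi> \<tau>) - \<xi>) < sqrt (\<eta> * \<rho> \<tau>) \<and>
      \<bar>Im (snd (decomp \<rho> \<xi> \<tau>))\<bar> < \<eta> * \<rho> \<tau> \<and> \<rho> \<tau> < \<epsilon>}"

definition D0 :: "(complex^('n::{finite,linorder})) set \<Rightarrow> real \<Rightarrow> real \<Rightarrow> (complex^('n::{finite,linorder})) set" where
  "D0 \<Omega> \<eta> \<epsilon> = {\<tau>. \<tau> \<notin> \<Omega> \<and>
      (\<Sum>k\<in>UNIV - {lastidx}. (cmod (\<tau>$k))^2) < \<eta> * Re (\<tau>$lastidx) \<and>
      \<bar>Im (\<tau>$lastidx)\<bar> < \<eta> * Re (\<tau>$lastidx) \<and>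
      \<bar>Re (\<tau>$lastidx)\<bar> < \<epsilon>}"

end

theory Submission
  imports Defs
begin

text \<open>
  At \<open>\<xi> = 0\<close> the complex tangent plane is \<open>{\<tau>\<^sub>n = 0}\<close> and the unit normal is \<open>e\<^sub>n\<close>, so
  \<open>D\<^sup>e(0,\<eta>,\<epsilon>)\<close> and \<open>D\<^sub>0(\<eta>,\<epsilon>)\<close> are described by the same conditions on
  \<open>|\<tau>'|\<^sup>2\<close> and \<open>|Im \<tau>\<^sub>n|\<close>, measured against the height \<open>\<rho>(\<tau>)\<close> resp. \<open>Re \<tau>\<^sub>n\<close>.
  On either region \<open>|\<tau>|\<^sup>2\<close> is small compared with the height, so the Taylor expansion
  \<open>\<rho>(\<tau>) = 2 Re \<tau>\<^sub>n + O(|\<tau>|\<^sup>2)\<close> makes \<open>\<rho>(\<tau>)\<close> and \<open>Re \<tau>\<^sub>n\<close> comparable, and both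
  inclusions follow with \<open>c = 4\<close>.
\<close>

definition tangential_normsq :: "complex^'n::{finite,linorder} \<Rightarrow> real" where
  "tangential_normsq \<tau> = (\<Sum>k\<in>UNIV - {lastidx}. (cmod (\<tau>$k))\<^sup>2)"

lemma tangential_normsq_nonneg: "0 \<le> tangential_normsq \<tau>"
  unfolding tangential_normsq_def by (intro sum_nonneg) simp

lemma norm_power2_eq_tangential_normsq:
  "norm \<tau> ^ 2 = tangential_normsq \<tau> + (Re (\<tau>$lastidx))\<^sup>2 + (Im (\<tau>$lastidx))\<^sup>2"
proof -
  have "norm \<tau> ^ 2 = (\<Sum>k\<in>UNIV. (cmod (\<tau>$k))\<^sup>2)"
    by (simp add: norm_vec_def L2_set_def sum_nonneg)
  also have "\<dots> = (cmod (\<tau>$lastidx))\<^sup>2 + tangential_normsq \<tau>"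
    unfolding tangential_normsq_def by (simp add: sum.remove)
  finally show ?thesis by (simp add: cmod_power2)
qed

lemma norm_axis: "norm (axis m x) = norm x"
proof -
  have "(\<Sum>i\<in>UNIV. (norm (axis m x $ i))\<^sup>2) = (\<Sum>i\<in>UNIV. if i = m then (norm x)\<^sup>2 else 0)"
    by (rule sum.cong) (auto simp: axis_def)
  then show ?thesis by (simp add: norm_vec_def L2_set_def)
qed

lemma norm_herm_form_le:
  "cmod (herm_form A z) \<le> (\<Sum>j\<in>UNIV. \<Sum>k\<in>UNIV. cmod (A$j$k)) * norm z ^ 2"
proof -
  have "cmod (herm_form A z) \<le> (\<Sum>j\<in>UNIV. \<Sum>k\<in>UNIV. cmod (A$j$k * z$j * cnj (z$k)))"
    unfolding herm_form_def by (rule order_trans[OF norm_sum sum_mono[OF norm_sum]])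
  also have "\<dots> \<le> (\<Sum>j\<in>UNIV. \<Sum>k\<in>UNIV. cmod (A$j$k) * norm z ^ 2)"
  proof (intro sum_mono)
    fix j k
    have "cmod (z$j) * cmod (z$k) \<le> norm z * norm z"
      by (intro mult_mono Finite_Cartesian_Product.norm_nth_le) auto
    then show "cmod (A$j$k * z$j * cnj (z$k)) \<le> cmod (A$j$k) * norm z ^ 2"
      by (simp add: norm_mult power2_eq_square mult.assoc mult_left_mono)
  qed
  also have "\<dots> = (\<Sum>j\<in>UNIV. \<Sum>k\<in>UNIV. cmod (A$j$k)) * norm z ^ 2"
    by (simp add: sum_distrib_right)
  finally show ?thesis .
qed

lemma quadratic_remainder_of_cubic_remainder:
  fixes f l q :: "'a::real_normed_vector \<Rightarrow> real"
  assumes "norm z \<le> 1"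
    and cubic: "\<bar>f z - (l z + q z)\<bar> \<le> M * norm z ^ 3"
    and quadratic: "\<bar>q z\<bar> \<le> K * norm z ^ 2"
  shows "\<bar>f z - l z\<bar> \<le> (K + \<bar>M\<bar>) * norm z ^ 2"
proof -
  have "M * norm z ^ 3 \<le> \<bar>M\<bar> * (norm z ^ 2 * norm z)"
    by (intro mult_mono) (auto simp: power3_eq_cube power2_eq_square)
  also have "\<dots> \<le> \<bar>M\<bar> * norm z ^ 2"
    using assms(1) by (intro mult_left_mono mult_right_le_one_le) auto
  finally show ?thesis
    using cubic quadratic by (simp add: algebra_simps)
qed

lemma has_derivative_at_0_of_quadratic_remainder:
  fixes f :: "'a::real_normed_vector \<Rightarrow> 'b::real_normed_vector"
  assumes l: "bounded_linear l" and "0 < d"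
    and remainder: "\<And>z. norm z < d \<Longrightarrow> norm (f z - l z) \<le> L * norm z ^ 2"
  shows "(f has_derivative l) (at 0)"
proof -
  have "f 0 = 0"
    using remainder[of 0] \<open>0 < d\<close> linear_0[OF bounded_linear.linear[OF l]] by simp
  have "\<forall>\<^sub>F z in at 0. norm (norm (f z - f 0 - l (z - 0)) / norm (z - 0)) \<le> L * norm z"
    unfolding eventually_at
  proof (intro exI[of _ d] conjI ballI impI)
    fix z :: 'a assume "z \<noteq> 0 \<and> dist z 0 < d"
    then show "norm (norm (f z - f 0 - l (z - 0)) / norm (z - 0)) \<le> L * norm z"
      using remainder[of z] \<open>f 0 = 0\<close> by (simp add: divide_le_eq power2_eq_square mult.assoc)
  qed (fact \<open>0 < d\<close>)
  moreover have "((\<lambda>z. L * norm z) \<longlongrightarrow> 0) (at 0)"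
    by (intro tendsto_eq_intros) auto
  ultimately have "((\<lambda>z. norm (f z - f 0 - l (z - 0)) / norm (z - 0)) \<longlongrightarrow> 0) (at 0)"
    by (rule Lim_null_comparison)
  with l show ?thesis
    unfolding has_derivative_iff_norm by blast
qed

lemma decomp_0_of_frechet_derivative:
  fixes \<rho> :: "complex^'n::{finite,linorder} \<Rightarrow> real"
  assumes "frechet_derivative \<rho> (at 0) = (\<lambda>z. 2 * Re (z$lastidx))"
  shows "decomp \<rho> 0 \<tau> = ((\<chi> k. if k = lastidx then 0 else \<tau>$k), \<tau>$lastidx)"
proof -
  have cpartial: "cpartial \<rho> 0 k = (if k = lastidx then 1 else 0)" for k
    unfolding cpartial_def assms by (auto simp: axis_def)
  have "dbar \<rho> 0 = axis lastidx 1"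
    unfolding dbar_def cpartial by (auto simp: vec_eq_iff axis_def)
  then have normal: "unormal \<rho> 0 = axis lastidx 1"
    unfolding unormal_def by (simp add: norm_axis)
  have tangent: "w \<in> tangent_plane \<rho> 0 \<longleftrightarrow> w$lastidx = 0" for w
    unfolding tangent_plane_def dpair_def cpartial by (simp add: mult_delta_left sum_negf)
  show ?thesis
    unfolding decomp_def
  proof (rule the_equality)
    fix p assume "case p of (w, t) \<Rightarrow> w \<in> tangent_plane \<rho> 0 \<and> \<tau> = w + t *s unormal \<rho> 0"
    then show "p = ((\<chi> k. if k = lastidx then 0 else \<tau>$k), \<tau>$lastidx)"
      by (cases p) (auto simp: tangent normal vec_eq_iff axis_def)
  qed (auto simp: tangent normal vec_eq_iff axis_def)
qed

locale quadratic_defining_function =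
  fixes \<Omega> :: "(complex^'n::{finite,linorder}) set"
    and \<rho> :: "complex^'n::{finite,linorder} \<Rightarrow> real"
    and L d :: real
  assumes Omega_eq: "\<Omega> = {z. \<rho> z < 0}"
    and L_pos: "0 < L"
    and d_pos: "0 < d"
    and rho_approx: "\<And>z. norm z < d \<Longrightarrow> \<bar>\<rho> z - 2 * Re (z$lastidx)\<bar> \<le> L * norm z ^ 2"
begin

lemma frechet_derivative_rho_0: "frechet_derivative \<rho> (at 0) = (\<lambda>z. 2 * Re (z$lastidx))"
proof (rule frechet_derivative_at[symmetric], rule has_derivative_at_0_of_quadratic_remainder)
  show "bounded_linear (\<lambda>z. 2 * Re (z$lastidx :: complex))"
    by (intro bounded_linear_const_mult bounded_linear_compose[OF bounded_linear_Re]
        bounded_linear_vec_nth)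
qed (use d_pos rho_approx in auto)

lemma mem_Dext_0_iff:
  "\<tau> \<in> Dext \<Omega> \<rho> 0 \<eta> \<epsilon> \<longleftrightarrow> \<tau> \<notin> \<Omega> \<and> tangential_normsq \<tau> < \<eta> * \<rho> \<tau> \<and>
     \<bar>Im (\<tau>$lastidx)\<bar> < \<eta> * \<rho> \<tau> \<and> \<rho> \<tau> < \<epsilon>"
proof -
  define w where "w = fst (decomp \<rho> 0 \<tau>)"
  have w: "w = (\<chi> k. if k = lastidx then 0 else \<tau>$k)" "snd (decomp \<rho> 0 \<tau>) = \<tau>$lastidx"
    unfolding w_def decomp_0_of_frechet_derivative[OF frechet_derivative_rho_0] by simp_all
  have "tangential_normsq w = tangential_normsq \<tau>"
    unfolding tangential_normsq_def w by simp
  then have "norm w ^ 2 = tangential_normsq \<tau>"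
    using norm_power2_eq_tangential_normsq[of w] by (simp add: w)
  then have "norm w = sqrt (tangential_normsq \<tau>)"
    by (metis norm_ge_zero real_sqrt_unique)
  then show ?thesis
    unfolding Dext_def by (simp add: w_def[symmetric] w(2))
qed

lemma rho_comparable_Re_last:
  assumes "norm \<tau> < d" and "\<tau> \<notin> \<Omega>" and "0 < \<rho> \<tau> + \<bar>Re (\<tau>$lastidx)\<bar>"
    and "L * norm \<tau> ^ 2 \<le> \<rho> \<tau> / 4 + \<bar>Re (\<tau>$lastidx)\<bar> / 2"
  shows "0 < Re (\<tau>$lastidx) \<and> 6 * Re (\<tau>$lastidx) \<le> 5 * \<rho> \<tau> \<and> 3 * \<rho> \<tau> \<le> 10 * Re (\<tau>$lastidx)"
proof -
  have "0 \<le> \<rho> \<tau>"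
    using assms(2) Omega_eq by auto
  moreover have "\<bar>\<rho> \<tau> - 2 * Re (\<tau>$lastidx)\<bar> \<le> \<rho> \<tau> / 4 + \<bar>Re (\<tau>$lastidx)\<bar> / 2"
    using rho_approx[OF assms(1)] assms(4) by linarith
  ultimately show ?thesis
    using assms(3) by arith
qed

lemma Dext_0_subset_D0:
  assumes "0 < \<eta>" "L * \<eta> \<le> 1/8" "r \<le> d" "r \<le> 1" "L * r \<le> 1/2"
  shows "Dext \<Omega> \<rho> 0 \<eta> \<epsilon> \<inter> ball 0 r \<subseteq> D0 \<Omega> (4 * \<eta>) (4 * \<epsilon>)"
proof
  fix \<tau> assume "\<tau> \<in> Dext \<Omega> \<rho> 0 \<eta> \<epsilon> \<inter> ball 0 r"
  then have out: "\<tau> \<notin> \<Omega>" and tangential: "tangential_normsq \<tau> < \<eta> * \<rho> \<tau>"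
    and Im_small: "\<bar>Im (\<tau>$lastidx)\<bar> < \<eta> * \<rho> \<tau>" and "\<rho> \<tau> < \<epsilon>" and "norm \<tau> < r"
    by (auto simp: mem_Dext_0_iff)
  define x y where "x = Re (\<tau>$lastidx)" and "y = Im (\<tau>$lastidx)"
  have "0 < \<eta> * \<rho> \<tau>"
    using tangential tangential_normsq_nonneg[of \<tau>] by linarith
  then have "0 < \<rho> \<tau>"
    using \<open>0 < \<eta>\<close> by (simp add: zero_less_mult_iff)
  have "\<bar>x\<bar> \<le> norm \<tau>" "\<bar>y\<bar> \<le> norm \<tau>"
    unfolding x_def y_def using abs_Re_le_cmod abs_Im_le_cmod Finite_Cartesian_Product.norm_nth_le
    by (metis order_trans)+
  have "\<bar>y\<bar> * \<bar>y\<bar> \<le> \<eta> * \<rho> \<tau> * 1"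
    using Im_small \<open>\<bar>y\<bar> \<le> norm \<tau>\<close> \<open>norm \<tau> < r\<close> \<open>r \<le> 1\<close> unfolding y_def
    by (intro mult_mono) auto
  moreover have "\<bar>x\<bar> * \<bar>x\<bar> \<le> r * \<bar>x\<bar>"
    using \<open>\<bar>x\<bar> \<le> norm \<tau>\<close> \<open>norm \<tau> < r\<close> by (intro mult_right_mono) auto
  ultimately have "L * norm \<tau> ^ 2 \<le> L * (2 * (\<eta> * \<rho> \<tau>) + r * \<bar>x\<bar>)"
    using tangential less_imp_le[OF L_pos] unfolding norm_power2_eq_tangential_normsq x_def y_def
    by (intro mult_left_mono) (auto simp: power2_eq_square)
  also have "\<dots> = 2 * (L * \<eta>) * \<rho> \<tau> + (L * r) * \<bar>x\<bar>"
    by (simp add: algebra_simps)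
  also have "\<dots> \<le> 2 * (1/8) * \<rho> \<tau> + (1/2) * \<bar>x\<bar>"
    using assms(2,5) \<open>0 < \<rho> \<tau>\<close> by (intro add_mono mult_right_mono) auto
  finally have "0 < x \<and> 6 * x \<le> 5 * \<rho> \<tau> \<and> 3 * \<rho> \<tau> \<le> 10 * x"
    using rho_comparable_Re_last[OF _ out] \<open>norm \<tau> < r\<close> \<open>r \<le> d\<close> \<open>0 < \<rho> \<tau>\<close>
    unfolding x_def y_def by force
  moreover have "\<eta> * \<rho> \<tau> < 4 * \<eta> * x"
    using calculation \<open>0 < \<eta>\<close> mult_left_mono[of "3 * \<rho> \<tau>" "10 * x" \<eta>] by auto
  ultimately show "\<tau> \<in> D0 \<Omega> (4 * \<eta>) (4 * \<epsilon>)"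
    using out tangential Im_small \<open>\<rho> \<tau> < \<epsilon>\<close> unfolding D0_def tangential_normsq_def x_def y_def
    by auto
qed

lemma D0_subset_Dext_0:
  assumes "0 < \<eta>" "\<eta> < e" "\<epsilon> < e" "e \<le> 1" "2 * e \<le> d" "L * e \<le> 1/6"
  shows "D0 \<Omega> \<eta> \<epsilon> \<subseteq> Dext \<Omega> \<rho> 0 (4 * \<eta>) (4 * \<epsilon>)"
proof
  fix \<tau> assume "\<tau> \<in> D0 \<Omega> \<eta> \<epsilon>"
  define x y where "x = Re (\<tau>$lastidx)" and "y = Im (\<tau>$lastidx)"
  have out: "\<tau> \<notin> \<Omega>" and tangential: "tangential_normsq \<tau> < \<eta> * x"
    and Im_small: "\<bar>y\<bar> < \<eta> * x" and Re_small: "\<bar>x\<bar> < \<epsilon>"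
    using \<open>\<tau> \<in> D0 \<Omega> \<eta> \<epsilon>\<close> unfolding D0_def tangential_normsq_def x_def y_def by auto
  have "0 < \<eta> * x"
    using tangential tangential_normsq_nonneg[of \<tau>] by linarith
  then have "0 < x"
    using \<open>0 < \<eta>\<close> by (simp add: zero_less_mult_iff)
  have "x < e"
    using Re_small assms(3) by linarith
  have "\<eta> * x \<le> e * x"
    using assms(2) \<open>0 < x\<close> by simp
  have "\<eta> * x \<le> 1 * 1"
    using assms(2,4) \<open>x < e\<close> \<open>0 < x\<close> by (intro mult_mono) auto
  then have "\<bar>y\<bar> * \<bar>y\<bar> \<le> \<eta> * x * 1"
    using Im_small by (intro mult_mono) auto
  moreover have "x * x \<le> e * x"
    using \<open>x < e\<close> \<open>0 < x\<close> by simp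
  ultimately have norm_le: "norm \<tau> ^ 2 \<le> 3 * e * x"
    using tangential \<open>\<eta> * x \<le> e * x\<close> unfolding norm_power2_eq_tangential_normsq x_def y_def
    by (simp add: power2_eq_square)
  have "3 * e * x < 3 * e * e"
    using \<open>0 < x\<close> \<open>x < e\<close> by simp
  then have "norm \<tau> ^ 2 < (2 * e)\<^sup>2"
    using norm_le zero_le_square[of e] by (simp add: power2_eq_square, linarith)
  then have "norm \<tau> < d"
    using assms(5) \<open>0 < x\<close> \<open>x < e\<close> by (smt (verit) power_mono norm_ge_zero)
  have "L * norm \<tau> ^ 2 \<le> L * (3 * e * x)"
    using norm_le less_imp_le[OF L_pos] by (rule mult_left_mono)
  also have "\<dots> \<le> x / 2"
    using assms(6) \<open>0 < x\<close> mult_right_mono[OF assms(6), of "3 * x"] by (simp add: algebra_simps)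
  finally have "0 < x \<and> 6 * x \<le> 5 * \<rho> \<tau> \<and> 3 * \<rho> \<tau> \<le> 10 * x"
    using rho_comparable_Re_last[OF \<open>norm \<tau> < d\<close> out] \<open>0 < x\<close> out Omega_eq
    unfolding x_def y_def by force
  moreover have "\<eta> * x < 4 * \<eta> * \<rho> \<tau>"
    using calculation \<open>0 < \<eta>\<close> mult_left_mono[of "6 * x" "5 * \<rho> \<tau>" \<eta>] by auto
  ultimately show "\<tau> \<in> Dext \<Omega> \<rho> 0 (4 * \<eta>) (4 * \<epsilon>)"
    using out tangential Im_small Re_small unfolding mem_Dext_0_iff x_def y_def by auto
qed

lemma Dext_0_D0_comparable:
  "\<exists>\<epsilon>0 r. 0 < \<epsilon>0 \<and> 0 < r \<and>
     (\<forall>\<eta> \<epsilon>. 0 < \<eta> \<and> \<eta> < \<epsilon>0 \<and> 0 < \<epsilon> \<and> \<epsilon> < \<epsilon>0 \<longrightarrow>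
        Dext \<Omega> \<rho> 0 \<eta> \<epsilon> \<inter> ball 0 r \<subseteq> D0 \<Omega> (4 * \<eta>) (4 * \<epsilon>) \<and>
        D0 \<Omega> \<eta> \<epsilon> \<subseteq> Dext \<Omega> \<rho> 0 (4 * \<eta>) (4 * \<epsilon>))"
proof -
  define e where "e = min (min d 1 / 2) (1 / (8 * L))"
  define r where "r = min (min d 1) (1 / (2 * L))"
  have "L * e \<le> L * (1 / (8 * L))" "L * r \<le> L * (1 / (2 * L))"
    using L_pos unfolding e_def r_def by (intro mult_left_mono; simp)+
  then have e: "0 < e" "2 * e \<le> d" "e \<le> 1" "L * e \<le> 1/8"
    and r: "0 < r" "r \<le> d" "r \<le> 1" "L * r \<le> 1/2"
    using L_pos d_pos unfolding e_def r_def by auto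
  have "Dext \<Omega> \<rho> 0 \<eta> \<epsilon> \<inter> ball 0 r \<subseteq> D0 \<Omega> (4 * \<eta>) (4 * \<epsilon>) \<and>
        D0 \<Omega> \<eta> \<epsilon> \<subseteq> Dext \<Omega> \<rho> 0 (4 * \<eta>) (4 * \<epsilon>)"
    if small: "0 < \<eta>" "\<eta> < e" "\<epsilon> < e" for \<eta> \<epsilon>
  proof
    have "L * \<eta> \<le> L * e"
      using small L_pos by simp
    then show "Dext \<Omega> \<rho> 0 \<eta> \<epsilon> \<inter> ball 0 r \<subseteq> D0 \<Omega> (4 * \<eta>) (4 * \<epsilon>)"
      using small e r by (intro Dext_0_subset_D0) auto
    show "D0 \<Omega> \<eta> \<epsilon> \<subseteq> Dext \<Omega> \<rho> 0 (4 * \<eta>) (4 * \<epsilon>)"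
      using small e by (intro D0_subset_Dext_0[of \<eta> e]) auto
  qed
  with e(1) r(1) show ?thesis
    by blast
qed

end

lemma quadratic_defining_function_of_cubic_expansion:
  fixes \<rho> :: "complex^'n::{finite,linorder} \<Rightarrow> real"
  assumes "\<Omega> = {z. \<rho> z < 0}" and "0 < \<delta>"
    and cubic: "\<And>z. norm z < \<delta> \<Longrightarrow>
      \<bar>\<rho> z - (2 * Re (z$lastidx) + Re (herm_form A z))\<bar> \<le> M * norm z ^ 3"
  shows "quadratic_defining_function \<Omega> \<rho> ((\<Sum>j\<in>UNIV. \<Sum>k\<in>UNIV. cmod (A$j$k)) + \<bar>M\<bar> + 1) (min \<delta> 1)"
    (is "quadratic_defining_function \<Omega> \<rho> (?K + \<bar>M\<bar> + 1) ?d")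
proof
  have "0 \<le> ?K"
    by (intro sum_nonneg) auto
  then show "0 < ?K + \<bar>M\<bar> + 1"
    by linarith
  show "\<Omega> = {z. \<rho> z < 0}" "0 < ?d"
    using assms(1,2) by auto
  fix z :: "complex^'n::{finite,linorder}" assume "norm z < ?d"
  have "\<bar>Re (herm_form A z)\<bar> \<le> ?K * norm z ^ 2"
    using abs_Re_le_cmod norm_herm_form_le by (rule order_trans)
  then have "\<bar>\<rho> z - 2 * Re (z$lastidx)\<bar> \<le> (?K + \<bar>M\<bar>) * norm z ^ 2"
    using \<open>norm z < ?d\<close> cubic[of z]
    by (intro quadratic_remainder_of_cubic_remainder[where q = "\<lambda>z. Re (herm_form A z)"]) auto
  also have "\<dots> \<le> (?K + \<bar>M\<bar> + 1) * norm z ^ 2"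
    by (simp add: mult_right_mono)
  finally show "\<bar>\<rho> z - 2 * Re (z$lastidx)\<bar> \<le> (?K + \<bar>M\<bar> + 1) * norm z ^ 2" .
qed

theorem lemma6:
  fixes \<Omega> :: "(complex^('n::{finite,linorder})) set"
    and \<rho> :: "complex^('n::{finite,linorder}) \<Rightarrow> real"
    and A :: "complex^('n::{finite,linorder})^('n::{finite,linorder})"
  assumes "CARD('n) \<ge> 2"
    and "strongly_convex_domain \<Omega> \<rho>"
    and "0 \<in> frontier \<Omega>"
    and "hermitian_pos_def A"
    and "\<exists>M \<delta>. \<delta> > 0 \<and> (\<forall>z. norm z < \<delta> \<longrightarrow>
           \<bar>\<rho> z - (2 * Re (z$lastidx) + Re (herm_form A z))\<bar> \<le> M * norm z ^ 3)"
  shows "\<exists>c \<epsilon>0 r. c > 0 \<and> \<epsilon>0 > 0 \<and> r > 0 \<and>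
           (\<forall>\<eta> \<epsilon>. 0 < \<eta> \<and> \<eta> < \<epsilon>0 \<and> 0 < \<epsilon> \<and> \<epsilon> < \<epsilon>0 \<longrightarrow>
              Dext \<Omega> \<rho> 0 \<eta> \<epsilon> \<inter> ball 0 r \<subseteq> D0 \<Omega> (c * \<eta>) (c * \<epsilon>) \<and>
              D0 \<Omega> \<eta> \<epsilon> \<subseteq> Dext \<Omega> \<rho> 0 (c * \<eta>) (c * \<epsilon>))"
proof -
  obtain M \<delta> where "0 < \<delta>" and "\<forall>z. norm z < \<delta> \<longrightarrow>
      \<bar>\<rho> z - (2 * Re (z$lastidx) + Re (herm_form A z))\<bar> \<le> M * norm z ^ 3"
    using assms(5) by blast
  moreover have "\<Omega> = {z. \<rho> z < 0}"
    using assms(2) unfolding strongly_convex_domain_def by blast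
  ultimately interpret quadratic_defining_function \<Omega> \<rho>
      "(\<Sum>j\<in>UNIV. \<Sum>k\<in>UNIV. cmod (A$j$k)) + \<bar>M\<bar> + 1" "min \<delta> 1"
    by (intro quadratic_defining_function_of_cubic_expansion) auto
  have "(0 :: real) < 4"
    by simp
  with Dext_0_D0_comparable show ?thesis
    by blast
qed

end
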